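(* Let $\varepsilon,\delta,s>0$ with $0<4\delta s\le\varepsilon^2$. Let $\tilde u:\mathbb R\to\mathbb R$ be a smooth monotone function satisfying \[ \Big(\frac{\tilde u^2}{2}\Big)'=\varepsilon\tilde u''-\delta\tilde u''',\qquad \tilde u(x)\to \mp s,\ \ \tilde u'(x)\to0\ \text{ as }x\to\pm\infty . \] Then, with $\underline\lambda=\sqrt2-1$ and $\bar\lambda=1$, \[ \underline\lambda\,(s-\tilde u(x))(\tilde u(x)+s)\le-\varepsilon\tilde u'(x)\le\bar\lambda\,(s-\tilde u(x))(\tilde u(x)+s)\qquad\forall x\in\mathbb R . \]
   Context: Here $\tilde u$ is the (stationary, speed $\sigma=0$) viscous-dispersive shock profile of the KdV--Burgers equation $u_t+(u^2/2)_x=\varepsilon u_{xx}-\delta u_{xxx}$ connecting $u_-=s$ to $u_+=-s$. *)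

theory Defs
  imports "HOL-Analysis.Analysis"
begin

definition smooth_fun :: "(real \<Rightarrow> real) \<Rightarrow> bool" where
  "smooth_fun f \<longleftrightarrow> (\<forall>n x. ((deriv ^^ n) f) differentiable (at x))"

end

theory Submission
  imports Defs
begin

text \<open>
  Integrating the ODE once and evaluating at \<open>+\<infinity>\<close> gives
  \<open>\<delta> u'' = \<epsilon> u' + (s\<^sup>2 - u\<^sup>2)/2\<close>. For \<open>0 \<le> \<mu> \<le> 1\<close> the function
  \<open>G = -\<epsilon> u' - \<mu> (s\<^sup>2 - u\<^sup>2)\<close> then satisfies \<open>G' = a G + (s\<^sup>2 - u\<^sup>2) q\<^sub>\<mu>(u) / (2\<delta>\<epsilon>)\<close>
  with \<open>a = \<epsilon>/\<delta> - 2\<mu>u/\<epsilon> \<ge> 0\<close> and \<open>q\<^sub>\<mu>(u) = (2\<mu> - 1)\<epsilon>\<^sup>2 - 4\<delta>\<mu>\<^sup>2u\<close>. As \<open>G\<close>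
  vanishes at \<open>+\<infinity>\<close>, the integrating factor \<open>exp(-\<integral>a)\<close> shows that \<open>G\<close> has the sign
  opposite to \<open>q\<^sub>\<mu>\<close> whenever \<open>q\<^sub>\<mu>(u)\<close> has a fixed sign along the profile. The condition
  \<open>4\<delta>s \<le> \<epsilon>\<^sup>2\<close> makes \<open>q\<^sub>1 \<ge> 0\<close>, and \<open>\<mu> = \<surd>2 - 1\<close> is the root of \<open>\<mu>\<^sup>2 + 2\<mu> - 1\<close>,
  for which \<open>q\<^sub>\<mu> = -\<mu>\<^sup>2 (\<epsilon>\<^sup>2 + 4\<delta>u) \<le> 0\<close>.
\<close>

lemma smooth_fun_has_real_derivative:
  assumes "smooth_fun f"
  shows "((deriv ^^ n) f has_real_derivative (deriv ^^ Suc n) f x) (at x)"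
  using assms by (simp add: smooth_fun_def DERIV_deriv_iff_real_differentiable)

lemma mono_between_limits:
  fixes f :: "real \<Rightarrow> real"
  assumes "mono f" and "(f \<longlongrightarrow> a) at_bot" and "(f \<longlongrightarrow> b) at_top"
  shows "a \<le> f x \<and> f x \<le> b"
proof
  have "\<forall>\<^sub>F y in at_bot. f y \<le> f x"
    using eventually_le_at_bot[of x] by eventually_elim (use assms(1) in \<open>auto simp: mono_def\<close>)
  then show "a \<le> f x"
    using tendsto_le[OF trivial_limit_at_bot_linorder tendsto_const assms(2)] by blast
  have "\<forall>\<^sub>F y in at_top. f x \<le> f y"
    using eventually_ge_at_top[of x] by eventually_elim (use assms(1) in \<open>auto simp: mono_def\<close>)
  then show "f x \<le> b"
    using tendsto_le[OF trivial_limit_at_top_linorder assms(3) tendsto_const] by blast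
qed

lemma monotone_between_limits:
  fixes f :: "real \<Rightarrow> real"
  assumes "mono f \<or> antimono f" and "(f \<longlongrightarrow> a) at_bot" and "(f \<longlongrightarrow> b) at_top"
  shows "min a b \<le> f x \<and> f x \<le> max a b"
  using assms(1)
proof
  assume "mono f"
  then show ?thesis
    using mono_between_limits[OF _ assms(2,3), of x] by (simp add: min_le_iff_disj le_max_iff_disj)
next
  assume "antimono f"
  then have "mono (\<lambda>x. - f x)"
    by (simp add: mono_def antimono_def)
  then show ?thesis
    using mono_between_limits[OF _ tendsto_minus[OF assms(2)] tendsto_minus[OF assms(3)], of x]
    by (simp add: min_le_iff_disj le_max_iff_disj)
qed

lemma derivative_limit_at_top_eq_0:
  fixes f f' :: "real \<Rightarrow> real"
  assumes f': "\<And>x. (f has_real_derivative f' x) (at x)"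
    and f_lim: "(f \<longlongrightarrow> c) at_top" and f'_lim: "(f' \<longlongrightarrow> L) at_top"
  shows "L = 0"
proof (rule ccontr)
  assume "L \<noteq> 0"
  have "\<forall>\<^sub>F x in at_top. dist (f' x) L < \<bar>L\<bar> / 2"
    using tendstoD[OF f'_lim, of "\<bar>L\<bar> / 2"] \<open>L \<noteq> 0\<close> by simp
  moreover have "\<forall>\<^sub>F x in at_top. dist (f x) c < \<bar>L\<bar> / 4"
    using tendstoD[OF f_lim, of "\<bar>L\<bar> / 4"] \<open>L \<noteq> 0\<close> by simp
  ultimately have "\<forall>\<^sub>F x in at_top. dist (f' x) L < \<bar>L\<bar> / 2 \<and> dist (f x) c < \<bar>L\<bar> / 4"
    by (rule eventually_conj)
  then obtain X where X: "\<And>x. x \<ge> X \<Longrightarrow> \<bar>f' x - L\<bar> < \<bar>L\<bar> / 2 \<and> \<bar>f x - c\<bar> < \<bar>L\<bar> / 4"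
    by (auto simp: eventually_at_top_linorder dist_real_def)
  obtain z where "X < z" and "f (X + 1) - f X = f' z"
    using MVT2[of X "X + 1" f f'] f' by auto
  then show False
    using X[of z] X[of X] X[of "X + 1"] by linarith
qed

lemma nonpos_if_deriv_ge_mult_and_tendsto_0:
  fixes G G' a :: "real \<Rightarrow> real"
  assumes G': "\<And>x. (G has_real_derivative G' x) (at x)"
    and a_cont: "\<And>x. isCont a x" and a_nonneg: "\<And>x. a x \<ge> 0"
    and ineq: "\<And>x. a x * G x \<le> G' x"
    and G_lim: "(G \<longlongrightarrow> 0) at_top"
  shows "G x \<le> 0"
proof -
  obtain A where A': "\<And>x. (A has_real_derivative a x) (at x)"
    using einterval_antiderivative[of "-\<infinity>" "\<infinity>" a] a_cont
    by (auto simp: has_real_derivative_iff_has_vector_derivative)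
  define P where "P y = G y * exp (- A y)" for y
  have "(P has_real_derivative (G' y - a y * G y) * exp (- A y)) (at y)" for y
    unfolding P_def by (rule derivative_eq_intros G' A' refl | simp add: algebra_simps)+
  then have P_mono: "P x \<le> P y" if "x \<le> y" for y
    using ineq by (intro DERIV_nonneg_imp_nondecreasing[OF that]) (auto intro!: exI)
  have A_mono: "A 0 \<le> A y" if "0 \<le> y" for y
    using A' a_nonneg by (intro DERIV_nonneg_imp_nondecreasing[OF that]) (auto intro!: exI)
  have "(P \<longlongrightarrow> 0) at_top"
  proof (rule Lim_null_comparison)
    show "\<forall>\<^sub>F y in at_top. norm (P y) \<le> \<bar>G y\<bar> * exp (- A 0)"
      using eventually_ge_at_top[of "0::real"]
      by eventually_elim (auto simp: P_def abs_mult A_mono intro!: mult_left_mono)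
    show "((\<lambda>y. \<bar>G y\<bar> * exp (- A 0)) \<longlongrightarrow> 0) at_top"
      using tendsto_mult_left_zero[OF tendsto_rabs_zero[OF G_lim]] by simp
  qed
  moreover have "\<forall>\<^sub>F y in at_top. P x \<le> P y"
    using eventually_ge_at_top[of x] by eventually_elim (rule P_mono)
  ultimately have "P x \<le> 0"
    using tendsto_lowerbound[of P 0 at_top "P x"] by simp
  then show ?thesis
    by (simp add: P_def mult_le_0_iff)
qed

lemma first_integral_at_top:
  fixes u u' u'' u''' :: "real \<Rightarrow> real"
  assumes "\<delta> \<noteq> 0"
    and u': "\<And>x. (u has_real_derivative u' x) (at x)"
    and u'': "\<And>x. (u' has_real_derivative u'' x) (at x)"
    and u''': "\<And>x. (u'' has_real_derivative u''' x) (at x)"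
    and ode: "\<And>x. u x * u' x = \<epsilon> * u'' x - \<delta> * u''' x"
    and u_lim: "(u \<longlongrightarrow> c) at_top" and u'_lim: "(u' \<longlongrightarrow> 0) at_top"
  shows "\<delta> * u'' x = \<epsilon> * u' x + (c\<^sup>2 - (u x)\<^sup>2) / 2"
proof -
  define E where "E y = (u y)\<^sup>2 / 2 - \<epsilon> * u' y + \<delta> * u'' y" for y
  have "(E has_real_derivative u y * u' y - \<epsilon> * u'' y + \<delta> * u''' y) (at y)" for y
    unfolding E_def by (rule derivative_eq_intros u' u'' u''' refl | simp)+
  then have "(E has_real_derivative 0) (at y)" for y
    by (simp add: ode)
  then have E_const: "E y = E 0" for y
    by (meson DERIV_isconst_all)
  have u''_eq: "u'' y = (E 0 - (u y)\<^sup>2 / 2 + \<epsilon> * u' y) / \<delta>" for y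
    using E_const[of y] \<open>\<delta> \<noteq> 0\<close> by (simp add: E_def field_simps)
  have "(u'' \<longlongrightarrow> (E 0 - c\<^sup>2 / 2 + \<epsilon> * 0) / \<delta>) at_top"
    unfolding u''_eq[abs_def] using u_lim u'_lim \<open>\<delta> \<noteq> 0\<close> by (intro tendsto_intros) auto
  then have "(E 0 - c\<^sup>2 / 2 + \<epsilon> * 0) / \<delta> = 0"
    by (rule derivative_limit_at_top_eq_0[OF u'' u'_lim])
  then show ?thesis
    using u''_eq[of x] \<open>\<delta> \<noteq> 0\<close> by (simp add: field_simps)
qed

locale kdv_burgers_profile =
  fixes \<epsilon> \<delta> s :: real and u u' u'' :: "real \<Rightarrow> real"
  assumes eps_pos: "0 < \<epsilon>" and delta_pos: "0 < \<delta>"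
    and admissible: "4 * \<delta> * s \<le> \<epsilon>\<^sup>2"
    and u': "\<And>x. (u has_real_derivative u' x) (at x)"
    and u'': "\<And>x. (u' has_real_derivative u'' x) (at x)"
    and reduced_ode: "\<And>x. \<delta> * u'' x = \<epsilon> * u' x + (s\<^sup>2 - (u x)\<^sup>2) / 2"
    and bounded: "\<And>x. \<bar>u x\<bar> \<le> s"
    and u_lim: "(u \<longlongrightarrow> -s) at_top" and u'_lim: "(u' \<longlongrightarrow> 0) at_top"
begin

lemma s_nonneg: "0 \<le> s"
  using bounded[of 0] by linarith

lemma comparison_bound:
  assumes "0 \<le> \<mu>" and "\<mu> \<le> 1"
    and sign: "\<And>y. 0 \<le> \<sigma> * ((2 * \<mu> - 1) * \<epsilon>\<^sup>2 - 4 * \<delta> * \<mu>\<^sup>2 * u y)"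
  shows "\<sigma> * (- \<epsilon> * u' x - \<mu> * (s\<^sup>2 - (u x)\<^sup>2)) \<le> 0"
proof -
  define a where "a y = \<epsilon> / \<delta> - 2 * \<mu> * u y / \<epsilon>" for y
  define G where "G y = \<sigma> * (- \<epsilon> * u' y - \<mu> * (s\<^sup>2 - (u y)\<^sup>2))" for y
  define G' where "G' y = \<sigma> * (- \<epsilon> * u'' y + 2 * \<mu> * u y * u' y)" for y
  have "isCont a y" for y
    unfolding a_def by (intro continuous_intros DERIV_isCont[OF u']) (use eps_pos in simp)
  moreover have "0 \<le> a y" for y
  proof -
    have "\<mu> * u y \<le> \<mu> * \<bar>u y\<bar>"
      using \<open>0 \<le> \<mu>\<close> by (simp add: mult_left_mono)
    also have "\<dots> \<le> \<bar>u y\<bar>"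
      using \<open>0 \<le> \<mu>\<close> \<open>\<mu> \<le> 1\<close> by (simp add: mult_left_le_one_le)
    finally have "\<mu> * u y \<le> s"
      using bounded[of y] by linarith
    then have "\<delta> * (\<mu> * u y) \<le> \<delta> * s"
      using delta_pos by simp
    moreover have "0 \<le> \<delta> * s"
      using delta_pos s_nonneg by simp
    ultimately have "2 * \<delta> * (\<mu> * u y) \<le> \<epsilon>\<^sup>2"
      using admissible by linarith
    then show ?thesis
      using eps_pos delta_pos by (simp add: a_def field_simps power2_eq_square)
  qed
  moreover have "(G has_real_derivative G' y) (at y)" for y
    unfolding G_def G'_def by (rule derivative_eq_intros u' u'' refl | simp add: algebra_simps)+
  moreover have "a y * G y \<le> G' y" for y
  proof -
    have u''_eq: "u'' y = (\<epsilon> * u' y + (s\<^sup>2 - (u y)\<^sup>2) / 2) / \<delta>"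
      using reduced_ode[of y] delta_pos by (simp add: field_simps)
    have G'_eq: "G' y - a y * G y
        = \<sigma> * ((2 * \<mu> - 1) * \<epsilon>\<^sup>2 - 4 * \<delta> * \<mu>\<^sup>2 * u y) * (s\<^sup>2 - (u y)\<^sup>2) / (2 * \<delta> * \<epsilon>)"
      unfolding a_def G_def G'_def u''_eq
      using eps_pos delta_pos by (simp add: field_simps power2_eq_square)
    have "0 \<le> s\<^sup>2 - (u y)\<^sup>2"
      using bounded[of y] s_nonneg by (simp add: power2_le_iff_abs_le)
    then have "0 \<le> \<sigma> * ((2 * \<mu> - 1) * \<epsilon>\<^sup>2 - 4 * \<delta> * \<mu>\<^sup>2 * u y) * (s\<^sup>2 - (u y)\<^sup>2) / (2 * \<delta> * \<epsilon>)"
      using sign[of y] eps_pos delta_pos by simp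
    with G'_eq show ?thesis
      by simp
  qed
  moreover have "(G \<longlongrightarrow> \<sigma> * (- \<epsilon> * 0 - \<mu> * (s\<^sup>2 - (- s)\<^sup>2))) at_top"
    unfolding G_def by (intro tendsto_intros u_lim u'_lim)
  ultimately show ?thesis
    using nonpos_if_deriv_ge_mult_and_tendsto_0[of G G' a x] by (simp add: G_def)
qed

lemma upper_bound: "- \<epsilon> * u' x \<le> s\<^sup>2 - (u x)\<^sup>2"
proof -
  have "0 \<le> 1 * ((2 * 1 - 1) * \<epsilon>\<^sup>2 - 4 * \<delta> * 1\<^sup>2 * u y)" for y
  proof -
    have "\<delta> * u y \<le> \<delta> * s"
      using bounded[of y] delta_pos by (simp add: abs_le_iff)
    then show ?thesis
      using admissible by simp
  qed
  then show ?thesis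
    using comparison_bound[of 1 1 x] by simp
qed

lemma lower_bound: "(sqrt 2 - 1) * (s\<^sup>2 - (u x)\<^sup>2) \<le> - \<epsilon> * u' x"
proof -
  define \<mu> :: real where "\<mu> = sqrt 2 - 1"
  have "0 \<le> \<mu>" and "\<mu> \<le> 1"
    by (auto simp: \<mu>_def real_le_lsqrt real_sqrt_le_iff)
  have \<mu>_root: "2 * \<mu> - 1 = - \<mu>\<^sup>2"
    by (simp add: \<mu>_def power2_diff)
  have "0 \<le> - 1 * ((2 * \<mu> - 1) * \<epsilon>\<^sup>2 - 4 * \<delta> * \<mu>\<^sup>2 * u y)" for y
  proof -
    have "\<delta> * (- u y) \<le> \<delta> * s"
      using bounded[of y] delta_pos by (intro mult_left_mono) auto
    then have "0 \<le> \<mu>\<^sup>2 * (\<epsilon>\<^sup>2 + 4 * \<delta> * u y)"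
      using admissible by simp
    then show ?thesis
      unfolding \<mu>_root by (simp add: algebra_simps)
  qed
  then show ?thesis
    using comparison_bound[OF \<open>0 \<le> \<mu>\<close> \<open>\<mu> \<le> 1\<close>, of "- 1" x] by (simp add: \<mu>_def)
qed

end

theorem lemma2p3:
  fixes \<epsilon> \<delta> s :: real and u :: "real \<Rightarrow> real"
  assumes "\<epsilon> > 0" and "\<delta> > 0" and "s > 0"
    and "4 * \<delta> * s \<le> \<epsilon>\<^sup>2"
    and "smooth_fun u"
    and "mono u \<or> antimono u"
    and "\<And>x. deriv (\<lambda>y. (u y)\<^sup>2 / 2) x
               = \<epsilon> * deriv (deriv u) x - \<delta> * deriv (deriv (deriv u)) x"
    and "(u \<longlongrightarrow> -s) at_top" and "(u \<longlongrightarrow> s) at_bot"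
    and "(deriv u \<longlongrightarrow> 0) at_top" and "(deriv u \<longlongrightarrow> 0) at_bot"
  shows "\<forall>x. (sqrt 2 - 1) * (s - u x) * (u x + s) \<le> - \<epsilon> * deriv u x
          \<and> - \<epsilon> * deriv u x \<le> 1 * (s - u x) * (u x + s)"
proof -
  have u': "(u has_real_derivative deriv u x) (at x)"
    and u'': "(deriv u has_real_derivative deriv (deriv u) x) (at x)"
    and u''': "(deriv (deriv u) has_real_derivative deriv (deriv (deriv u)) x) (at x)" for x
    using smooth_fun_has_real_derivative[OF assms(5), of _ x, where n = 0]
      smooth_fun_has_real_derivative[OF assms(5), of _ x, where n = 1]
      smooth_fun_has_real_derivative[OF assms(5), of _ x, where n = 2]
    by (simp_all add: numeral_2_eq_2)
  have "deriv (\<lambda>y. (u y)\<^sup>2 / 2) x = u x * deriv u x" for x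
    by (rule DERIV_imp_deriv) (rule derivative_eq_intros u' refl | simp)+
  then have ode: "u x * deriv u x = \<epsilon> * deriv (deriv u) x - \<delta> * deriv (deriv (deriv u)) x" for x
    using assms(7) by metis
  have "\<bar>u x\<bar> \<le> s" for x
    using monotone_between_limits[OF assms(6,9,8), of x] assms(3) by (simp add: abs_le_iff)
  then interpret kdv_burgers_profile \<epsilon> \<delta> s u "deriv u" "deriv (deriv u)"
    using assms(1,2,4,8,10) u' u'' first_integral_at_top[OF _ u' u'' u''' ode assms(8,10)]
    by unfold_locales auto
  have "(s - u x) * (u x + s) = s\<^sup>2 - (u x)\<^sup>2" for x
    by (simp add: algebra_simps power2_eq_square)
  then show ?thesis
    using lower_bound upper_bound by (simp add: mult.assoc)
qed

end
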